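(* If $a$ is an integral algebraic element of a ring $K$, then the monogenic ring $\mathbb{Z}\langle a\rangle$ is finitely separable.
   Context: Rings are associative and not necessarily unital. $a\in K$ is integral algebraic if $f(a)=0$ for some monic $f\in\mathbb{Z}[x]$ with $f(0)=0$. $\mathbb{Z}\langle a\rangle=\{g(a): g\in\mathbb{Z}[x],\ g(0)=0\}$ is the subring generated by $a$. A ring $R$ is finitely separable if for every $r\in R$ and every subring $A\subseteq R$ with $r\notin A$ there exist a finite ring $F$ and a homomorphism $\varphi:R\to F$ with $\varphi(r)\notin\varphi(A)$. *)

theory Defs
  imports "HOL-Computational_Algebra.Polynomial"
begin

text \<open>Rings are associative, not necessarily unital: type class ring.\<close>

fun npow :: "'a::ring \<Rightarrow> nat \<Rightarrow> 'a" where
  "npow a 0 = 0"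
| "npow a (Suc 0) = a"
| "npow a (Suc (Suc n)) = npow a (Suc n) * a"

definition zsmul :: "int \<Rightarrow> 'a::ab_group_add \<Rightarrow> 'a" where
  "zsmul k x = (if 0 \<le> k then (\<Sum>_<nat k. x) else - (\<Sum>_<nat (-k). x))"

text \<open>evaluation g(a) of an integer polynomial without constant term (constant coefficient ignored)\<close>
definition peval :: "int poly \<Rightarrow> 'a::ring \<Rightarrow> 'a" where
  "peval g a = (\<Sum>i\<in>{1..degree g}. zsmul (coeff g i) (npow a i))"

definition integral_algebraic :: "'a::ring \<Rightarrow> bool" where
  "integral_algebraic a \<longleftrightarrow>
     (\<exists>f :: int poly. lead_coeff f = 1 \<and> poly f 0 = 0 \<and> peval f a = 0)"

definition Zgen :: "'a::ring \<Rightarrow> 'a set" where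
  "Zgen a = {peval g a | g :: int poly. poly g 0 = 0}"

definition subring_of :: "'a::ring set \<Rightarrow> bool" where
  "subring_of A \<longleftrightarrow> 0 \<in> A \<and> (\<forall>x\<in>A. - x \<in> A) \<and>
     (\<forall>x\<in>A. \<forall>y\<in>A. x + y \<in> A \<and> x * y \<in> A)"

definition nu_ring_on :: "'b set \<Rightarrow> ('b \<Rightarrow> 'b \<Rightarrow> 'b) \<Rightarrow> ('b \<Rightarrow> 'b \<Rightarrow> 'b) \<Rightarrow> 'b \<Rightarrow> ('b \<Rightarrow> 'b) \<Rightarrow> bool" where
  "nu_ring_on S add mul z neg \<longleftrightarrow>
     z \<in> S \<and> (\<forall>x\<in>S. neg x \<in> S) \<and> (\<forall>x\<in>S. \<forall>y\<in>S. add x y \<in> S \<and> mul x y \<in> S) \<and>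
     (\<forall>x\<in>S. \<forall>y\<in>S. \<forall>w\<in>S. add (add x y) w = add x (add y w)) \<and>
     (\<forall>x\<in>S. \<forall>y\<in>S. add x y = add y x) \<and>
     (\<forall>x\<in>S. add z x = x) \<and>
     (\<forall>x\<in>S. add (neg x) x = z) \<and>
     (\<forall>x\<in>S. \<forall>y\<in>S. \<forall>w\<in>S. mul (mul x y) w = mul x (mul y w)) \<and>
     (\<forall>x\<in>S. \<forall>y\<in>S. \<forall>w\<in>S. mul x (add y w) = add (mul x y) (mul x w)) \<and>
     (\<forall>x\<in>S. \<forall>y\<in>S. \<forall>w\<in>S. mul (add x y) w = add (mul x w) (mul y w))"

definition hom_on :: "'a::ring set \<Rightarrow> 'b set \<Rightarrow> ('b \<Rightarrow> 'b \<Rightarrow> 'b) \<Rightarrow> ('b \<Rightarrow> 'b \<Rightarrow> 'b) \<Rightarrow> ('a \<Rightarrow> 'b) \<Rightarrow> bool" where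
  "hom_on R S add mul \<phi> \<longleftrightarrow> \<phi> ` R \<subseteq> S \<and>
     (\<forall>x\<in>R. \<forall>y\<in>R. \<phi> (x + y) = add (\<phi> x) (\<phi> y) \<and> \<phi> (x * y) = mul (\<phi> x) (\<phi> y))"

text \<open>finite rings are represented (up to isomorphism) with carrier a finite set of naturals\<close>
definition fin_separable :: "'a::ring set \<Rightarrow> bool" where
  "fin_separable R \<longleftrightarrow>
     (\<forall>r\<in>R. \<forall>A. subring_of A \<and> A \<subseteq> R \<and> r \<notin> A \<longrightarrow>
        (\<exists>(S :: nat set) add mul z neg \<phi>. finite S \<and> nu_ring_on S add mul z neg \<and>
            hom_on R S add mul \<phi> \<and> \<phi> r \<notin> \<phi> ` A))"

end

theory Submission
  imports Defs "HOL-Library.Set_Algebras"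
begin

text \<open>
  By the monic relation, every positive power of \<open>a\<close> is an integer combination of
  \<open>a, \<dots>, a\<^sup>n\<close>, so \<open>R = \<int>\<langle>a\<rangle>\<close> is a finitely generated abelian group that is closed under
  multiplication. In a finitely generated abelian group every subgroup \<open>A\<close> is closed in the
  profinite topology: if \<open>r \<notin> A\<close> then \<open>r \<notin> A + mR\<close> for some \<open>m > 0\<close> (induction on the
  number of generators). Since \<open>mR\<close> is an ideal of finite index, the quotient map
  \<open>R \<rightarrow> R/mR\<close> onto a finite ring separates \<open>r\<close> from \<open>A\<close>.
\<close>

section \<open>Integer multiples\<close>

lemma zsmul_zero_left [simp]: "zsmul 0 x = 0"
  by (simp add: zsmul_def)

lemma zsmul_one [simp]: "zsmul 1 x = x"
  by (simp add: zsmul_def)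

lemma zsmul_add_one: "zsmul (k + 1) x = zsmul k x + x"
proof (cases "k \<ge> 0")
  case True
  then have "nat (k + 1) = Suc (nat k)" by simp
  with True show ?thesis by (simp add: zsmul_def)
next
  case False
  then have "nat (- k) = Suc (nat (- (k + 1)))" by simp
  moreover have "zsmul (k + 1) x = - (\<Sum>_<nat (- (k + 1)). x)"
    using False by (cases "k = -1") (auto simp: zsmul_def)
  ultimately show ?thesis using False by (simp add: zsmul_def)
qed

lemma zsmul_left_distrib: "zsmul (k + l) x = zsmul k x + zsmul l x"
proof (induction l rule: int_induct[where k = 0])
  case base
  then show ?case by simp
next
  case (step1 i)
  then show ?case
    using zsmul_add_one[of "k + i" x] zsmul_add_one[of i x] by (simp add: add.assoc)
next
  case (step2 i)
  then show ?case
    using zsmul_add_one[of "k + (i - 1)" x] zsmul_add_one[of "i - 1" x] by (simp add: algebra_simps)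
qed

interpretation zsmul_left: additive "\<lambda>k. zsmul k x"
  by standard (rule zsmul_left_distrib)

interpretation zsmul_right: additive "zsmul k"
  by standard (simp add: zsmul_def sum.distrib)

declare zsmul_right.zero [simp]

lemma additive_zsmul: "additive h \<Longrightarrow> h (zsmul k x) = zsmul k (h x)"
  by (simp add: zsmul_def additive.sum additive.minus)

lemma zsmul_int: "zsmul k l = k * l"
  by (simp add: zsmul_def)

lemma zsmul_zsmul: "zsmul k (zsmul l x) = zsmul (k * l) x"
  using additive_zsmul[OF zsmul_left.additive_axioms, of k l x] by (simp add: zsmul_int)

lemma mult_zsmul_left: "zsmul k x * y = zsmul k (x * y :: 'a::ring)"
  by (rule additive_zsmul) (simp add: additive_def distrib_right)

lemma mult_zsmul_right: "y * zsmul k x = zsmul k (y * x :: 'a::ring)"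
  by (rule additive_zsmul) (simp add: additive_def distrib_left)

section \<open>Additive subgroups and integer spans\<close>

definition add_subgroup :: "'a::ab_group_add set \<Rightarrow> bool" where
  "add_subgroup T \<longleftrightarrow> 0 \<in> T \<and> (\<forall>x\<in>T. - x \<in> T) \<and> (\<forall>x\<in>T. \<forall>y\<in>T. x + y \<in> T)"

lemma add_subgroupD:
  assumes "add_subgroup T"
  shows add_subgroup_zero: "0 \<in> T"
    and add_subgroup_minus: "x \<in> T \<Longrightarrow> - x \<in> T"
    and add_subgroup_add: "x \<in> T \<Longrightarrow> y \<in> T \<Longrightarrow> x + y \<in> T"
    and add_subgroup_diff: "x \<in> T \<Longrightarrow> y \<in> T \<Longrightarrow> x - y \<in> T"
  using assms unfolding add_subgroup_def by (blast, blast, blast, metis diff_conv_add_uminus)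

lemma add_subgroup_UNIV: "add_subgroup UNIV"
  by (simp add: add_subgroup_def)

lemma subring_of_imp_add_subgroup: "subring_of R \<Longrightarrow> add_subgroup R"
  by (simp add: subring_of_def add_subgroup_def)

lemma add_subgroup_sum: "add_subgroup T \<Longrightarrow> (\<And>i. i \<in> A \<Longrightarrow> f i \<in> T) \<Longrightarrow> sum f A \<in> T"
  by (induction A rule: infinite_finite_induct) (simp_all add: add_subgroupD)

lemma add_subgroup_zsmul: "add_subgroup T \<Longrightarrow> x \<in> T \<Longrightarrow> zsmul k x \<in> T"
  by (simp add: zsmul_def add_subgroup_sum add_subgroup_minus)

lemma add_subgroup_image: "additive h \<Longrightarrow> add_subgroup T \<Longrightarrow> add_subgroup (h ` T)"
  unfolding add_subgroup_def
  by (auto simp flip: additive.zero additive.minus additive.add)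

lemma add_subgroup_vimage: "additive h \<Longrightarrow> add_subgroup T \<Longrightarrow> add_subgroup (h -` T)"
  unfolding add_subgroup_def by (simp add: additive.zero additive.minus additive.add)

lemma add_subgroup_set_plus:
  assumes "add_subgroup A" "add_subgroup B"
  shows "add_subgroup (A + B)"
  unfolding add_subgroup_def
proof (intro conjI ballI)
  show "0 \<in> A + B"
    using set_plus_intro[OF add_subgroup_zero[OF assms(1)] add_subgroup_zero[OF assms(2)]] by simp
next
  fix x assume "x \<in> A + B"
  then obtain a b where "x = a + b" "a \<in> A" "b \<in> B" by (rule set_plus_elim)
  then have "- x = - a + - b" by simp
  then show "- x \<in> A + B"
    by (metis set_plus_intro add_subgroup_minus assms \<open>a \<in> A\<close> \<open>b \<in> B\<close>)
next
  fix x y assume "x \<in> A + B" "y \<in> A + B"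
  then obtain a b a' b' where "x = a + b" "y = a' + b'" "a \<in> A" "b \<in> B" "a' \<in> A" "b' \<in> B"
    by (auto elim!: set_plus_elim)
  then have "x + y = (a + a') + (b + b')" by (simp add: algebra_simps)
  then show "x + y \<in> A + B"
    using assms \<open>a \<in> A\<close> \<open>b \<in> B\<close> \<open>a' \<in> A\<close> \<open>b' \<in> B\<close> by (auto intro!: set_plus_intro add_subgroup_add)
qed

fun zspan :: "'a::ab_group_add list \<Rightarrow> 'a set" where
  "zspan [] = {0}"
| "zspan (g # gs) = range (\<lambda>c. zsmul c g) + zspan gs"

lemma zspan_ConsI: "s \<in> zspan gs \<Longrightarrow> zsmul c g + s \<in> zspan (g # gs)"
  by auto

lemma zspan_ConsE:
  assumes "x \<in> zspan (g # gs)"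
  obtains c s where "x = zsmul c g + s" "s \<in> zspan gs"
  using assms by (auto elim: set_plus_elim)

lemma add_subgroup_zspan: "add_subgroup (zspan gs)"
proof (induction gs)
  case Nil
  then show ?case by (simp add: add_subgroup_def)
next
  case (Cons g gs)
  have "add_subgroup (range (\<lambda>c. zsmul c g))"
    using add_subgroup_image[OF zsmul_left.additive_axioms add_subgroup_UNIV] .
  with Cons show ?case by (simp add: add_subgroup_set_plus)
qed

lemma set_subset_zspan: "set gs \<subseteq> zspan gs"
proof (induction gs)
  case (Cons g gs)
  have "g = zsmul 1 g + 0" by simp
  then have "g \<in> zspan (g # gs)"
    by (metis zspan_ConsI add_subgroup_zero[OF add_subgroup_zspan])
  moreover have "s \<in> zspan (g # gs)" if "s \<in> zspan gs" for s
    using zspan_ConsI[OF that, of 0 g] by simp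
  ultimately show ?case using Cons by auto
qed simp

lemma zspan_subset:
  assumes "add_subgroup T"
  shows "set gs \<subseteq> T \<Longrightarrow> zspan gs \<subseteq> T"
proof (induction gs)
  case (Cons g gs)
  show ?case
  proof
    fix x assume "x \<in> zspan (g # gs)"
    then obtain c s where "x = zsmul c g + s" "s \<in> zspan gs" by (rule zspan_ConsE)
    with Cons assms show "x \<in> T" by (auto intro: add_subgroup_add add_subgroup_zsmul)
  qed
qed (simp add: add_subgroup_zero[OF assms])

section \<open>Separating an element from a subgroup modulo \<open>m\<close>\<close>

lemma zsmul_in_add_subgroup_cases:
  assumes "add_subgroup M"
  obtains k where "k > 0" "zsmul k g \<in> M" | "\<And>c. zsmul c g \<in> M \<Longrightarrow> c = 0"
proof (cases "\<exists>c. c \<noteq> 0 \<and> zsmul c g \<in> M")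
  case True
  then obtain c where c: "c \<noteq> 0" "zsmul c g \<in> M" by blast
  have "zsmul \<bar>c\<bar> g \<in> M"
    using c add_subgroup_minus[OF assms c(2)] by (cases "c \<ge> 0") (simp_all add: zsmul_left.minus)
  with c show ?thesis by (intro that(1)[of "\<bar>c\<bar>"]) simp_all
qed blast

lemma zsmul_separation:
  assumes M: "add_subgroup M" and t: "zsmul t g \<notin> M"
  shows "\<exists>m>0. \<forall>c. zsmul (t - m * c) g \<notin> M"
proof (cases rule: zsmul_in_add_subgroup_cases[OF M, where g = g])
  case (1 k)
  have "zsmul (t - k * c) g \<notin> M" for c
  proof
    assume "zsmul (t - k * c) g \<in> M"
    moreover have "zsmul (k * c) g \<in> M"
      using add_subgroup_zsmul[OF M 1(2), of c] by (simp add: zsmul_zsmul mult.commute)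
    ultimately have "zsmul (t - k * c) g + zsmul (k * c) g \<in> M" by (rule add_subgroup_add[OF M])
    with t show False by (simp flip: zsmul_left_distrib)
  qed
  with 1 show ?thesis by blast
next
  case 2
  have "t \<noteq> 0" using t add_subgroup_zero[OF M] by auto
  have "t - (\<bar>t\<bar> + 1) * c \<noteq> 0" for c
  proof (cases "c = 0")
    case False
    then have "\<bar>t\<bar> + 1 \<le> (\<bar>t\<bar> + 1) * \<bar>c\<bar>"
      using mult_left_mono[of 1 "\<bar>c\<bar>" "\<bar>t\<bar> + 1"] by simp
    moreover have "\<bar>(\<bar>t\<bar> + 1) * c\<bar> = (\<bar>t\<bar> + 1) * \<bar>c\<bar>" by (simp add: abs_mult)
    ultimately have "\<bar>(\<bar>t\<bar> + 1) * c\<bar> > \<bar>t\<bar>" by linarith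
    then show ?thesis by auto
  qed (simp add: \<open>t \<noteq> 0\<close>)
  with 2 have "\<forall>c. zsmul (t - (\<bar>t\<bar> + 1) * c) g \<notin> M" by blast
  then show ?thesis by (intro exI[of _ "\<bar>t\<bar> + 1"]) simp
qed

lemma zspan_Cons_separation_head:
  assumes L: "add_subgroup L" and t: "zsmul t g \<notin> L + zspan gs" and s: "s \<in> zspan gs"
  shows "\<exists>m>0. zsmul t g + s \<notin> L + zsmul m ` zspan (g # gs)"
proof -
  have M: "add_subgroup (L + zspan gs)" by (rule add_subgroup_set_plus[OF L add_subgroup_zspan])
  obtain m where m: "m > 0" "\<And>c. zsmul (t - m * c) g \<notin> L + zspan gs"
    using zsmul_separation[OF M t] by blast
  have "zsmul t g + s \<notin> L + zsmul m ` zspan (g # gs)"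
  proof
    assume "zsmul t g + s \<in> L + zsmul m ` zspan (g # gs)"
    then obtain l c s' where l: "l \<in> L" and s': "s' \<in> zspan gs"
      and eq: "zsmul t g + s = l + zsmul m (zsmul c g + s')"
      by (auto elim!: set_plus_elim zspan_ConsE)
    from eq have "zsmul (t - m * c) g = l + (zsmul m s' - s)"
      by (simp add: zsmul_right.add zsmul_zsmul zsmul_left.diff algebra_simps)
    also have "\<dots> \<in> L + zspan gs"
      using l s s' by (intro set_plus_intro add_subgroup_diff add_subgroup_zsmul add_subgroup_zspan)
    finally show False using m(2) by blast
  qed
  with m(1) show ?thesis by blast
qed

text \<open>Take \<open>k\<close> to be the order of \<open>g\<close> modulo \<open>L + S\<close> if it is finite, and \<open>1\<close> otherwise.\<close>

lemma zsmul_multiple_absorb: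
  assumes L: "add_subgroup L" and S: "add_subgroup S"
  obtains k where "k > 0"
    and "\<And>n c. zsmul (n * k * c) g \<in> L + S \<Longrightarrow> zsmul (n * k * c) g \<in> L + zsmul n ` S"
proof (cases rule: zsmul_in_add_subgroup_cases[OF add_subgroup_set_plus[OF L S], where g = g])
  case (1 k)
  then obtain l s where ls: "zsmul k g = l + s" "l \<in> L" "s \<in> S" by (auto elim: set_plus_elim)
  have "zsmul (n * k * c) g \<in> L + zsmul n ` S" for n c
  proof -
    have "zsmul (n * k * c) g = zsmul (n * c) (zsmul k g)" by (simp add: zsmul_zsmul ac_simps)
    also have "\<dots> = zsmul (n * c) l + zsmul n (zsmul c s)"
      by (simp add: ls(1) zsmul_right.add zsmul_zsmul)
    also have "\<dots> \<in> L + zsmul n ` S"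
      using ls L S by (intro set_plus_intro imageI add_subgroup_zsmul)
    finally show ?thesis .
  qed
  with 1 show ?thesis by (intro that[of k]) auto
next
  case 2
  show ?thesis
  proof (rule that[of 1])
    fix n c assume "zsmul (n * 1 * c) g \<in> L + S"
    with 2 have "n * 1 * c = 0" by blast
    then have "zsmul (n * 1 * c) g = 0 + zsmul n 0" by (simp only:) simp
    also have "\<dots> \<in> L + zsmul n ` S"
      using L S by (intro set_plus_intro imageI add_subgroup_zero)
    finally show "zsmul (n * 1 * c) g \<in> L + zsmul n ` S" .
  qed simp
qed

lemma zspan_Cons_separation_tail:
  assumes L: "add_subgroup L" and l0: "l0 \<in> L" and u: "u \<in> zspan gs"
    and m0: "m0 > 0" "u \<notin> L + zsmul m0 ` zspan gs"
  shows "\<exists>m>0. l0 + u \<notin> L + zsmul m ` zspan (g # gs)"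
proof -
  obtain k where k: "k > 0"
    and absorb: "\<And>c. zsmul (m0 * k * c) g \<in> L + zspan gs
                  \<Longrightarrow> zsmul (m0 * k * c) g \<in> L + zsmul m0 ` zspan gs"
    using zsmul_multiple_absorb[OF L add_subgroup_zspan] by metis
  have "l0 + u \<notin> L + zsmul (m0 * k) ` zspan (g # gs)"
  proof
    assume "l0 + u \<in> L + zsmul (m0 * k) ` zspan (g # gs)"
    then obtain l c s where l: "l \<in> L" and s: "s \<in> zspan gs"
      and "l0 + u = l + zsmul (m0 * k) (zsmul c g + s)"
      by (auto elim!: set_plus_elim zspan_ConsE)
    then have u_eq: "u = (l - l0) + zsmul (m0 * k * c) g + zsmul m0 (zsmul k s)"
      by (simp add: zsmul_right.add zsmul_zsmul algebra_simps)
    then have "zsmul (m0 * k * c) g = (l0 - l) + (u - zsmul m0 (zsmul k s))"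
      by (simp add: algebra_simps)
    also have "\<dots> \<in> L + zspan gs"
      using l l0 u s by (intro set_plus_intro add_subgroup_diff add_subgroup_zsmul add_subgroup_zspan L)
    finally have "zsmul (m0 * k * c) g \<in> L + zsmul m0 ` zspan gs" by (rule absorb)
    then obtain l' s' where l': "l' \<in> L" and s': "s' \<in> zspan gs"
      and "zsmul (m0 * k * c) g = l' + zsmul m0 s'"
      by (auto elim!: set_plus_elim)
    with u_eq have "u = (l - l0 + l') + zsmul m0 (s' + zsmul k s)"
      by (simp add: zsmul_right.add algebra_simps)
    moreover have "l - l0 + l' \<in> L"
      using l l0 l' by (intro add_subgroup_add add_subgroup_diff L)
    moreover have "s' + zsmul k s \<in> zspan gs"
      using s' s by (intro add_subgroup_add add_subgroup_zsmul add_subgroup_zspan)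
    ultimately show False using m0(2) by blast
  qed
  then show ?thesis using m0(1) k by (intro exI[of _ "m0 * k"]) simp
qed

lemma zspan_separation:
  assumes L: "add_subgroup L"
  shows "v \<in> zspan gs \<Longrightarrow> v \<notin> L \<Longrightarrow> \<exists>m>0. v \<notin> L + zsmul m ` zspan gs"
proof (induction gs arbitrary: v)
  case Nil
  then show ?case using add_subgroup_zero[OF L] by simp
next
  case (Cons g gs)
  obtain t s where v: "v = zsmul t g + s" and s: "s \<in> zspan gs"
    using Cons.prems(1) by (rule zspan_ConsE)
  show ?case
  proof (cases "zsmul t g \<in> L + zspan gs")
    case False
    then show ?thesis unfolding v by (rule zspan_Cons_separation_head[OF L _ s])
  next
    case True
    then obtain l0 s0 where l0: "l0 \<in> L" and s0: "s0 \<in> zspan gs" and "zsmul t g = l0 + s0"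
      by (rule set_plus_elim)
    then have v_eq: "v = l0 + (s0 + s)" by (simp add: v add.assoc)
    have u: "s0 + s \<in> zspan gs" using s0 s by (rule add_subgroup_add[OF add_subgroup_zspan])
    have "s0 + s \<notin> L"
      using Cons.prems(2) add_subgroup_add[OF L l0] by (auto simp: v_eq)
    with Cons.IH[OF u] obtain m0 where "m0 > 0" "s0 + s \<notin> L + zsmul m0 ` zspan gs" by blast
    then show ?thesis unfolding v_eq by (rule zspan_Cons_separation_tail[OF L l0 u])
  qed
qed

lemma zspan_finite_mod:
  assumes "m > 0"
  shows "\<exists>F. finite F \<and> zspan gs \<subseteq> F + zsmul m ` zspan gs"
proof (induction gs)
  case Nil
  then show ?case by (intro exI[of _ "{0}"]) auto
next
  case (Cons g gs)
  then obtain F where F: "finite F" "zspan gs \<subseteq> F + zsmul m ` zspan gs" by blast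
  define F' where "F' = (\<lambda>(c, y). zsmul c g + y) ` ({0..<m} \<times> F)"
  have "zspan (g # gs) \<subseteq> F' + zsmul m ` zspan (g # gs)"
  proof
    fix x assume "x \<in> zspan (g # gs)"
    then obtain c s where x: "x = zsmul c g + s" and "s \<in> zspan gs" by (rule zspan_ConsE)
    then obtain y s' where y: "y \<in> F" "s' \<in> zspan gs" "s = y + zsmul m s'"
      using F(2) by (auto elim!: set_plus_elim)
    have "zsmul c g = zsmul (c mod m) g + zsmul m (zsmul (c div m) g)"
      by (simp only: zsmul_zsmul flip: zsmul_left_distrib) (simp add: mult.commute)
    then have "x = (zsmul (c mod m) g + y) + zsmul m (zsmul (c div m) g + s')"
      using x y(3) by (simp add: zsmul_right.add algebra_simps)
    moreover have "zsmul (c mod m) g + y \<in> F'"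
      unfolding F'_def using y(1) assms by (intro image_eqI[of _ _ "(c mod m, y)"]) auto
    moreover have "zsmul (c div m) g + s' \<in> zspan (g # gs)" using y(2) by (rule zspan_ConsI)
    ultimately show "x \<in> F' + zsmul m ` zspan (g # gs)" by auto
  qed
  moreover have "finite F'" unfolding F'_def using F(1) by simp
  ultimately show ?case by blast
qed

section \<open>Finite quotient rings\<close>

definition ring_ideal :: "'a::ring set \<Rightarrow> 'a set \<Rightarrow> bool" where
  "ring_ideal I R \<longleftrightarrow> add_subgroup I \<and> (\<forall>x\<in>I. \<forall>y\<in>R. x * y \<in> I \<and> y * x \<in> I)"

lemma ring_ideal_zsmul_image:
  assumes "subring_of R"
  shows "ring_ideal (zsmul m ` R) R"
  unfolding ring_ideal_def
proof (intro conjI ballI)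
  show "add_subgroup (zsmul m ` R)"
    by (rule add_subgroup_image[OF zsmul_right.additive_axioms subring_of_imp_add_subgroup[OF assms]])
next
  fix x y assume "x \<in> zsmul m ` R" "y \<in> R"
  then obtain s where "s \<in> R" "x = zsmul m s" by blast
  with \<open>y \<in> R\<close> assms show "x * y \<in> zsmul m ` R" "y * x \<in> zsmul m ` R"
    by (auto simp: mult_zsmul_left mult_zsmul_right subring_of_def)
qed

lemma coset_eq_iff:
  assumes I: "add_subgroup I"
  shows "x +o I = y +o I \<longleftrightarrow> x - y \<in> I"
proof
  assume "x +o I = y +o I"
  then have "x \<in> y +o I"
    using set_plus_intro2[OF add_subgroup_zero[OF I], of x] by simp
  then show "x - y \<in> I" by (rule set_plus_imp_minus)
next
  assume xy: "x - y \<in> I"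
  have "z \<in> y +o I" if "z \<in> x +o I" for z
    using add_subgroup_add[OF I xy set_plus_imp_minus[OF that]]
    by (simp add: set_minus_plus[symmetric])
  moreover have "z \<in> x +o I" if "z \<in> y +o I" for z
    using add_subgroup_diff[OF I set_plus_imp_minus[OF that] xy]
    by (simp add: set_minus_plus[symmetric])
  ultimately show "x +o I = y +o I" by blast
qed

lemma finite_index_quotient_map:
  assumes I: "add_subgroup I" and F: "finite F" and R: "R \<subseteq> F + I"
  obtains \<phi> :: "'a::ab_group_add \<Rightarrow> nat"
  where "finite (\<phi> ` R)" "\<And>x y. x \<in> R \<Longrightarrow> y \<in> R \<Longrightarrow> \<phi> x = \<phi> y \<longleftrightarrow> x - y \<in> I"
proof -
  have "(\<lambda>x. x +o I) ` R \<subseteq> (\<lambda>x. x +o I) ` F"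
  proof
    fix C assume "C \<in> (\<lambda>x. x +o I) ` R"
    then obtain x where "x \<in> R" "C = x +o I" by blast
    from R \<open>x \<in> R\<close> have "x \<in> F + I" by (rule subsetD)
    then obtain y i where "x = y + i" "y \<in> F" "i \<in> I" by (rule set_plus_elim)
    then have "C = y +o I" using \<open>C = x +o I\<close> by (simp add: coset_eq_iff[OF I])
    with \<open>y \<in> F\<close> show "C \<in> (\<lambda>x. x +o I) ` F" by blast
  qed
  then have fin: "finite ((\<lambda>x. x +o I) ` R)"
    by (rule finite_subset) (rule finite_imageI[OF F])
  \<comment> \<open>\<open>fin_separable\<close> wants the finite ring carried by naturals, so number the cosets\<close>
  then obtain e :: "'a set \<Rightarrow> nat" where e: "inj_on e ((\<lambda>x. x +o I) ` R)"
    using finite_imp_inj_to_nat_seg[OF fin] by blast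
  show ?thesis
  proof
    show "finite ((\<lambda>x. e (x +o I)) ` R)"
      using finite_imageI[OF fin, of e] by (simp add: image_image)
    show "e (x +o I) = e (y +o I) \<longleftrightarrow> x - y \<in> I" if "x \<in> R" "y \<in> R" for x y
    proof -
      from that have "x +o I \<in> (\<lambda>x. x +o I) ` R" "y +o I \<in> (\<lambda>x. x +o I) ` R" by blast+
      then have "e (x +o I) = e (y +o I) \<longleftrightarrow> x +o I = y +o I" by (rule inj_on_eq_iff[OF e])
      then show ?thesis by (simp add: coset_eq_iff[OF I])
    qed
  qed
qed

lemma ring_ideal_cong:
  assumes I: "ring_ideal I R" and "x \<in> R" "y' \<in> R" and x: "x' - x \<in> I" and y: "y' - y \<in> I"
  shows "(x' + y') - (x + y) \<in> I" "- x' - - x \<in> I" "x' * y' - x * y \<in> I"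
proof -
  have sub: "add_subgroup I" and mult: "\<And>u v. u \<in> I \<Longrightarrow> v \<in> R \<Longrightarrow> u * v \<in> I \<and> v * u \<in> I"
    using I unfolding ring_ideal_def by blast+
  have "(x' + y') - (x + y) = (x' - x) + (y' - y)" by (simp add: algebra_simps)
  also have "\<dots> \<in> I" using add_subgroup_add[OF sub x y] .
  finally show "(x' + y') - (x + y) \<in> I" .
  have "- x' - - x = - (x' - x)" by simp
  also have "\<dots> \<in> I" using add_subgroup_minus[OF sub x] .
  finally show "- x' - - x \<in> I" .
  have "x' * y' - x * y = (x' - x) * y' + x * (y' - y)" by (simp add: algebra_simps)
  also have "\<dots> \<in> I"
    using mult x y \<open>x \<in> R\<close> \<open>y' \<in> R\<close> by (blast intro: add_subgroup_add[OF sub])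
  finally show "x' * y' - x * y \<in> I" .
qed

lemma nu_ring_on_image:
  assumes R: "subring_of R" and I: "ring_ideal I R"
    and fibres: "\<And>x y. x \<in> R \<Longrightarrow> y \<in> R \<Longrightarrow> \<phi> x = \<phi> y \<longleftrightarrow> x - y \<in> I"
  shows "\<exists>add mul z neg. nu_ring_on (\<phi> ` R) add mul z neg \<and> hom_on R (\<phi> ` R) add mul \<phi>"
proof -
  note closed = subring_of_def[THEN iffD1, OF R]
  define \<rho> where "\<rho> = inv_into R \<phi>"
  have \<rho>: "\<rho> (\<phi> x) \<in> R" "\<rho> (\<phi> x) - x \<in> I" if "x \<in> R" for x
    using that fibres[of "\<rho> (\<phi> x)" x] by (simp_all add: \<rho>_def inv_into_into f_inv_into_f)
  define add where "add u v = \<phi> (\<rho> u + \<rho> v)" for u v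
  define mul where "mul u v = \<phi> (\<rho> u * \<rho> v)" for u v
  define neg where "neg u = \<phi> (- \<rho> u)" for u
  have add: "add (\<phi> x) (\<phi> y) = \<phi> (x + y)"
    and mul: "mul (\<phi> x) (\<phi> y) = \<phi> (x * y)"
    and neg: "neg (\<phi> x) = \<phi> (- x)" if "x \<in> R" "y \<in> R" for x y
    using ring_ideal_cong[OF I that(1) \<rho>(1)[OF that(2)] \<rho>(2)[OF that(1)] \<rho>(2)[OF that(2)]]
      that \<rho> closed
    by (simp_all add: add_def mul_def neg_def fibres)
  have "nu_ring_on (\<phi> ` R) add mul (\<phi> 0) neg"
    unfolding nu_ring_on_def using closed
    by (simp add: add mul neg add_ac mult.assoc distrib_left distrib_right)
  moreover have "hom_on R (\<phi> ` R) add mul \<phi>"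
    unfolding hom_on_def by (simp add: add mul)
  ultimately show ?thesis by blast
qed

lemma fin_separable_zspan:
  assumes "subring_of (zspan gs)"
  shows "fin_separable (zspan gs)"
  unfolding fin_separable_def
proof (intro ballI allI impI)
  fix r A assume r: "r \<in> zspan gs" and A: "subring_of A \<and> A \<subseteq> zspan gs \<and> r \<notin> A"
  obtain m where "m > 0" and m: "r \<notin> A + zsmul m ` zspan gs"
    using zspan_separation[OF subring_of_imp_add_subgroup r] A by blast
  let ?I = "zsmul m ` zspan gs"
  have I: "ring_ideal ?I (zspan gs)" by (rule ring_ideal_zsmul_image[OF assms])
  then have "add_subgroup ?I" by (simp add: ring_ideal_def)
  obtain F where "finite F" "zspan gs \<subseteq> F + ?I" using zspan_finite_mod[OF \<open>m > 0\<close>] by blast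
  then obtain \<phi> :: "'a \<Rightarrow> nat" where fin: "finite (\<phi> ` zspan gs)"
    and fibres: "\<And>x y. x \<in> zspan gs \<Longrightarrow> y \<in> zspan gs \<Longrightarrow> \<phi> x = \<phi> y \<longleftrightarrow> x - y \<in> ?I"
    using finite_index_quotient_map[OF \<open>add_subgroup ?I\<close>] by metis
  obtain add mul z neg where "nu_ring_on (\<phi> ` zspan gs) add mul z neg"
    and "hom_on (zspan gs) (\<phi> ` zspan gs) add mul \<phi>"
    using nu_ring_on_image[OF assms I fibres] by blast
  moreover have "\<phi> r \<notin> \<phi> ` A"
  proof
    assume "\<phi> r \<in> \<phi> ` A"
    then obtain a where "a \<in> A" "\<phi> r = \<phi> a" by blast
    with A r fibres have "r - a \<in> ?I" by blast
    with \<open>a \<in> A\<close> have "a + (r - a) \<in> A + ?I" by (rule set_plus_intro)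
    with m show False by simp
  qed
  ultimately show "\<exists>(S :: nat set) add mul z neg \<phi>. finite S \<and> nu_ring_on S add mul z neg \<and>
      hom_on (zspan gs) S add mul \<phi> \<and> \<phi> r \<notin> \<phi> ` A"
    using fin by blast
qed

section \<open>The ring \<open>\<int>\<langle>a\<rangle>\<close>\<close>

lemma npow_Suc: "1 \<le> i \<Longrightarrow> npow a (Suc i) = npow a i * a"
  by (cases i) auto

lemma npow_add: "1 \<le> i \<Longrightarrow> 1 \<le> j \<Longrightarrow> npow a (i + j) = npow a i * npow a j"
proof (induction j)
  case (Suc j)
  then show ?case
    by (cases "j = 0") (simp_all add: npow_Suc mult.assoc)
qed simp

lemma peval_eq_sum:
  assumes "degree g \<le> N"
  shows "peval g a = (\<Sum>i\<in>{1..N}. zsmul (coeff g i) (npow a i))"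
  unfolding peval_def
  by (rule sum.mono_neutral_left) (use assms in \<open>auto simp: coeff_eq_0\<close>)

lemma peval_add: "peval (g + h) a = peval g a + peval h a"
proof -
  define N where "N = max (degree g) (degree h)"
  have "degree (g + h) \<le> N" unfolding N_def by (rule degree_add_le_max)
  then show ?thesis
    using peval_eq_sum[of g N a] peval_eq_sum[of h N a] peval_eq_sum[of "g + h" N a]
    by (simp add: N_def zsmul_left_distrib sum.distrib)
qed

lemma peval_minus: "peval (- g) a = - peval g a"
  by (simp add: peval_def zsmul_left.minus sum_negf)

lemma peval_monom: "peval (monom 1 i) a = npow a i"
proof -
  have "peval (monom 1 i) a = (\<Sum>j\<in>{1..i}. zsmul (coeff (monom 1 i) j) (npow a j))"
    by (rule peval_eq_sum) (simp add: degree_monom_le)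
  also have "\<dots> = (\<Sum>j\<in>{1..i}. if j = i then npow a j else 0)"
    by (rule sum.cong) (auto simp: coeff_monom)
  also have "\<dots> = npow a i" by (cases i) simp_all
  finally show ?thesis .
qed

lemma add_subgroup_Zgen: "add_subgroup (Zgen a)"
  unfolding add_subgroup_def Zgen_def
proof (intro conjI ballI)
  show "0 \<in> {peval g a |g. poly g 0 = 0}"
    by (intro CollectI exI[of _ 0]) (simp add: peval_def)
next
  fix x assume "x \<in> {peval g a |g. poly g 0 = 0}"
  then obtain g where "x = peval g a" "poly g 0 = 0" by blast
  then show "- x \<in> {peval g a |g. poly g 0 = 0}"
    by (intro CollectI exI[of _ "- g"]) (simp add: peval_minus)
next
  fix x y assume "x \<in> {peval g a |g. poly g 0 = 0}" "y \<in> {peval g a |g. poly g 0 = 0}"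
  then obtain g h where "x = peval g a" "poly g 0 = 0" "y = peval h a" "poly h 0 = 0" by blast
  then show "x + y \<in> {peval g a |g. poly g 0 = 0}"
    by (intro CollectI exI[of _ "g + h"]) (simp add: peval_add)
qed

lemma npow_in_Zgen: "1 \<le> i \<Longrightarrow> npow a i \<in> Zgen a"
  unfolding Zgen_def
  by (intro CollectI exI[of _ "monom 1 i"]) (simp add: peval_monom poly_monom)

lemma Zgen_subset:
  assumes T: "add_subgroup T" and pow: "\<And>i. 1 \<le> i \<Longrightarrow> npow a i \<in> T"
  shows "Zgen a \<subseteq> T"
  unfolding Zgen_def peval_def
  by (auto intro!: add_subgroup_sum[OF T] add_subgroup_zsmul[OF T] pow)

lemma subring_Zgen: "subring_of (Zgen a)"
proof -
  have pow_closed: "x * npow a j \<in> Zgen a" if "x \<in> Zgen a" "1 \<le> j" for x j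
  proof -
    have "Zgen a \<subseteq> (\<lambda>x. x * npow a j) -` Zgen a"
      using add_subgroup_Zgen \<open>1 \<le> j\<close>
      by (intro Zgen_subset add_subgroup_vimage)
         (auto simp: additive_def distrib_right npow_in_Zgen simp flip: npow_add)
    with that show ?thesis by blast
  qed
  have "x * y \<in> Zgen a" if "x \<in> Zgen a" "y \<in> Zgen a" for x y
  proof -
    have "Zgen a \<subseteq> (\<lambda>y. x * y) -` Zgen a"
      using add_subgroup_Zgen \<open>x \<in> Zgen a\<close>
      by (intro Zgen_subset add_subgroup_vimage) (auto simp: additive_def distrib_left pow_closed)
    with that show ?thesis by blast
  qed
  with add_subgroup_Zgen show ?thesis by (simp add: subring_of_def add_subgroup_def)
qed

lemma monic_relation:
  assumes "lead_coeff f = 1" "poly f 0 = 0" "peval f a = 0"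
  shows "1 \<le> degree f"
    and "npow a (degree f) = (\<Sum>j\<in>{1..<degree f}. zsmul (- coeff f j) (npow a j))"
proof -
  show n: "1 \<le> degree f"
    using assms(1,2) by (cases "degree f") (simp_all add: poly_0_coeff_0)
  have "peval f a = (\<Sum>j\<in>insert (degree f) {1..<degree f}. zsmul (coeff f j) (npow a j))"
    unfolding peval_def using n by (intro sum.cong) auto
  also have "\<dots> = npow a (degree f) + (\<Sum>j\<in>{1..<degree f}. zsmul (coeff f j) (npow a j))"
    using assms(1) by simp
  finally show "npow a (degree f) = (\<Sum>j\<in>{1..<degree f}. zsmul (- coeff f j) (npow a j))"
    using assms(3) by (simp add: zsmul_left.minus sum_negf eq_neg_iff_add_eq_0)
qed

lemma npow_in_zspan:
  assumes n: "1 \<le> n" and rel: "npow a n = (\<Sum>j\<in>{1..<n}. zsmul (c j) (npow a j))"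
  shows "1 \<le> i \<Longrightarrow> npow a i \<in> zspan (map (npow a) [1..<Suc n])"
proof (induction i rule: less_induct)
  case (less i)
  let ?T = "zspan (map (npow a) [1..<Suc n])"
  show ?case
  proof (cases "i \<le> n")
    case True
    with less.prems have "i \<in> set [1..<Suc n]" by (simp only: set_upt atLeastLessThan_iff less_Suc_eq_le)
    then have "npow a i \<in> set (map (npow a) [1..<Suc n])" unfolding set_map by (rule imageI)
    then show ?thesis by (rule subsetD[OF set_subset_zspan])
  next
    case False
    define k where "k = i - n"
    have k: "1 \<le> k" "i = k + n" using False by (simp_all add: k_def)
    have "npow a i = npow a k * npow a n" using k n by (simp add: npow_add)
    also have "\<dots> = (\<Sum>j\<in>{1..<n}. npow a k * zsmul (c j) (npow a j))"
      unfolding rel by (rule sum_distrib_left)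
    also have "\<dots> = (\<Sum>j\<in>{1..<n}. zsmul (c j) (npow a (k + j)))"
      using k(1) by (intro sum.cong) (simp_all add: mult_zsmul_right npow_add)
    also have "\<dots> \<in> ?T"
    proof (intro add_subgroup_sum[OF add_subgroup_zspan] add_subgroup_zsmul[OF add_subgroup_zspan])
      show "npow a (k + j) \<in> ?T" if "j \<in> {1..<n}" for j
        using that k by (intro less.IH) auto
    qed
    finally show ?thesis .
  qed
qed

lemma Zgen_eq_zspan:
  assumes "integral_algebraic a"
  obtains gs where "Zgen a = zspan gs"
proof -
  obtain f :: "int poly" where f: "lead_coeff f = 1" "poly f 0 = 0" "peval f a = 0"
    using assms unfolding integral_algebraic_def by blast
  let ?gs = "map (npow a) [1..<Suc (degree f)]"
  have "Zgen a \<subseteq> zspan ?gs"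
    using npow_in_zspan[OF monic_relation[OF f]] by (intro Zgen_subset add_subgroup_zspan)
  moreover have "zspan ?gs \<subseteq> Zgen a"
    by (intro zspan_subset add_subgroup_Zgen) (auto intro: npow_in_Zgen)
  ultimately show ?thesis using that by blast
qed

theorem lemma6:
  fixes a :: "'a::ring"
  assumes "integral_algebraic a"
  shows "fin_separable (Zgen a)"
proof -
  obtain gs where gs: "Zgen a = zspan gs" using Zgen_eq_zspan[OF assms] .
  show ?thesis using fin_separable_zspan subring_Zgen[of a] unfolding gs by blast
qed

end
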